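(* Let $d\ge 2$ and let $K\subset\mathbb{R}^d$ be a nondegenerate $d$-simplex with vertices $a_1,\dots,a_{d+1}$, barycentric coordinates $\lambda_1,\dots,\lambda_{d+1}$, and edge vectors $e_{ij}=a_j-a_i$. Let $$Z_K=\mathbb{P}_2(K)\oplus\operatorname{span}\{\lambda_i^2\lambda_j-\lambda_i\lambda_j^2:\ 1\le i<j\le d+1\},$$ $$\Sigma_K=\{p\mapsto p(a_i),\ p\mapsto (e_{ij}\cdot\nabla p)(a_i):\ 1\le i\le d+1,\ j\ne i\}.$$ Then $\Sigma_K$ is $Z_K$-unisolvent, i.e. every $p\in Z_K$ is uniquely determined by the values of the functionals in $\Sigma_K$. Moreover, the nodal basis functions $\phi_i$ (dual to $p(a_i)$) and $\phi_{ij}$ (dual to $(e_{ij}\cdot\nabla p)(a_i)$) are $$\phi_i=\lambda_i+\sum_{j\ne i}(\lambda_i^2\lambda_j-\lambda_i\lambda_j^2),\qquad \phi_{ij}=\tfrac12\bigl(\lambda_i\lambda_j+\lambda_i^2\lambda_j-\lambda_i\lambda_j^2\bigr).$$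
   Context: $\mathbb{P}_2(K)$ denotes polynomials of total degree at most $2$ on $K$. "Dual" means $\phi_i(a_k)=\delta_{ik}$, $(e_{kl}\cdot\nabla\phi_i)(a_k)=0$ for all $k\ne l$, and $\phi_{ij}(a_k)=0$, $(e_{kl}\cdot\nabla\phi_{ij})(a_k)=\delta_{ik}\delta_{jl}$. *)

theory Defs
  imports "HOL-Analysis.Analysis"
begin

definition P2 :: "(real^'n \<Rightarrow> real) set" where
  "P2 = {p. \<exists>(c::real) (b::'n \<Rightarrow> real) (A::'n \<Rightarrow> 'n \<Rightarrow> real).
            \<forall>x. p x = c + (\<Sum>k\<in>UNIV. b k * x$k) + (\<Sum>k\<in>UNIV. \<Sum>l\<in>UNIV. A k l * x$k * x$l)}"

definition cubic_pair :: "(nat \<Rightarrow> real^'n \<Rightarrow> real) \<Rightarrow> nat \<Rightarrow> nat \<Rightarrow> real^'n \<Rightarrow> real" where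
  "cubic_pair lam i j x = (lam i x)^2 * lam j x - lam i x * (lam j x)^2"

text \<open>Index pairs i<j among vertex indices 0..d.\<close>
definition pairs_lt :: "nat \<Rightarrow> (nat \<times> nat) set" where
  "pairs_lt d = {(i,j). i < j \<and> j \<le> d}"

definition cubic_span :: "nat \<Rightarrow> (nat \<Rightarrow> real^'n \<Rightarrow> real) \<Rightarrow> (real^'n \<Rightarrow> real) set" where
  "cubic_span d lam = {p. \<exists>c::nat \<Rightarrow> nat \<Rightarrow> real.
      \<forall>x. p x = (\<Sum>(i,j)\<in>pairs_lt d. c i j * cubic_pair lam i j x)}"

definition Zspace :: "nat \<Rightarrow> (nat \<Rightarrow> real^'n \<Rightarrow> real) \<Rightarrow> (real^'n \<Rightarrow> real) set" where
  "Zspace d lam = {p. \<exists>q\<in>P2. \<exists>r\<in>cubic_span d lam. \<forall>x. p x = q x + r x}"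

definition dirderiv :: "(real^'n \<Rightarrow> real) \<Rightarrow> real^'n \<Rightarrow> real^'n \<Rightarrow> real" where
  "dirderiv p x v = frechet_derivative p (at x) v"

end

theory Submission
  imports Defs
begin

(*
  Using sum_i lambda_i = 1 and x = sum_i lambda_i a_i, every p in Z_K can be written as
    p = sum_{i,j} B_ij lambda_i lambda_j + sum_{i,j} C_ij (lambda_i^2 lambda_j - lambda_i lambda_j^2),
  and p depends only on the symmetric part of B and the antisymmetric part of C.
  As lambda_i(a_k) = delta_ik and e_kl . grad lambda_i = delta_il - delta_ik, one finds
    p(a_k) = B_kk,   (e_kl . grad p)(a_k) = B_kl + B_lk - 2 B_kk + C_kl - C_lk.
  The derivatives along e_kl and e_lk therefore determine B_kl + B_lk and C_kl - C_lk, so the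
  degrees of freedom determine p; solving these relations gives the interpolant and the nodal basis.
*)

lemma P2_add: "p \<in> P2 \<Longrightarrow> q \<in> P2 \<Longrightarrow> (\<lambda>x. p x + q x) \<in> P2"
proof -
  assume "p \<in> P2" "q \<in> P2"
  then obtain c b A c' b' A' where
    p: "\<And>x. p x = c + (\<Sum>k\<in>UNIV. b k * x$k) + (\<Sum>k\<in>UNIV. \<Sum>l\<in>UNIV. A k l * x$k * x$l)" and
    q: "\<And>x. q x = c' + (\<Sum>k\<in>UNIV. b' k * x$k) + (\<Sum>k\<in>UNIV. \<Sum>l\<in>UNIV. A' k l * x$k * x$l)"
    unfolding P2_def by blast
  show ?thesis unfolding P2_def
    by (intro CollectI exI[of _ "c + c'"] exI[of _ "\<lambda>k. b k + b' k"] exI[of _ "\<lambda>k l. A k l + A' k l"])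
       (simp add: p q algebra_simps sum.distrib)
qed

lemma P2_cmult: "p \<in> P2 \<Longrightarrow> (\<lambda>x. r * p x) \<in> P2"
proof -
  assume "p \<in> P2"
  then obtain c b A where
    p: "\<And>x. p x = c + (\<Sum>k\<in>UNIV. b k * x$k) + (\<Sum>k\<in>UNIV. \<Sum>l\<in>UNIV. A k l * x$k * x$l)"
    unfolding P2_def by blast
  show ?thesis unfolding P2_def
    by (intro CollectI exI[of _ "r * c"] exI[of _ "\<lambda>k. r * b k"] exI[of _ "\<lambda>k l. r * A k l"])
       (simp add: p algebra_simps sum_distrib_left)
qed

lemma P2_zero: "(\<lambda>x. 0) \<in> P2"
  unfolding P2_def by (intro CollectI exI[of _ 0] exI[of _ "\<lambda>k. 0"] exI[of _ "\<lambda>k l. 0"]) simp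

lemma P2_sum: "finite S \<Longrightarrow> (\<And>i. i \<in> S \<Longrightarrow> f i \<in> P2) \<Longrightarrow> (\<lambda>x. \<Sum>i\<in>S. f i x) \<in> P2"
  by (induction S rule: finite_induct) (simp_all add: P2_zero P2_add)

lemma P2_mult_affine:
  assumes "\<And>x. p x = c + (\<Sum>k\<in>UNIV. w k * x$k)" and "\<And>x. q x = c' + (\<Sum>k\<in>UNIV. w' k * x$k)"
  shows "(\<lambda>x. p x * q x) \<in> P2"
proof -
  have "p x * q x = c * c' + (\<Sum>k\<in>UNIV. (c * w' k + c' * w k) * x$k)
                  + (\<Sum>k\<in>UNIV. \<Sum>l\<in>UNIV. w k * w' l * x$k * x$l)" for x
  proof -
    have "(\<Sum>k\<in>UNIV. w k * x$k) * (\<Sum>l\<in>UNIV. w' l * x$l) = (\<Sum>k\<in>UNIV. \<Sum>l\<in>UNIV. w k * w' l * x$k * x$l)"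
      by (simp add: sum_product algebra_simps)
    then show ?thesis
      by (simp add: assms sum.distrib sum_distrib_left algebra_simps)
  qed
  then show ?thesis unfolding P2_def
    by (intro CollectI exI[of _ "c * c'"] exI[of _ "\<lambda>k. c * w' k + c' * w k"] exI[of _ "\<lambda>k l. w k * w' l"]) blast
qed

definition bary_quad :: "nat \<Rightarrow> (nat \<Rightarrow> real^'n \<Rightarrow> real) \<Rightarrow> (nat \<Rightarrow> nat \<Rightarrow> real) \<Rightarrow> real^'n \<Rightarrow> real"
  where "bary_quad d lam B x = (\<Sum>i\<le>d. \<Sum>j\<le>d. B i j * lam i x * lam j x)"

definition bary_cubic :: "nat \<Rightarrow> (nat \<Rightarrow> real^'n \<Rightarrow> real) \<Rightarrow> (nat \<Rightarrow> nat \<Rightarrow> real) \<Rightarrow> real^'n \<Rightarrow> real"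
  where "bary_cubic d lam C x = (\<Sum>i\<le>d. \<Sum>j\<le>d. C i j * cubic_pair lam i j x)"

definition bary_poly ::
    "nat \<Rightarrow> (nat \<Rightarrow> real^'n \<Rightarrow> real) \<Rightarrow> (nat \<Rightarrow> nat \<Rightarrow> real) \<Rightarrow> (nat \<Rightarrow> nat \<Rightarrow> real) \<Rightarrow> real^'n \<Rightarrow> real"
  where "bary_poly d lam B C x = bary_quad d lam B x + bary_cubic d lam C x"

lemma bary_poly_diff:
  "bary_poly d lam (\<lambda>i j. B i j - B' i j) (\<lambda>i j. C i j - C' i j) x = bary_poly d lam B C x - bary_poly d lam B' C' x"
  by (simp add: bary_poly_def bary_quad_def bary_cubic_def algebra_simps sum_subtractf)

lemma bary_poly_zero_quad: "bary_poly d lam (\<lambda>_ _. 0) C = bary_cubic d lam C"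
  by (simp add: bary_poly_def bary_quad_def fun_eq_iff)

lemma bary_poly_zero_cubic: "bary_poly d lam B (\<lambda>_ _. 0) = bary_quad d lam B"
  by (simp add: bary_poly_def bary_cubic_def fun_eq_iff)

lemma cubic_pair_swap: "cubic_pair lam j i x = - cubic_pair lam i j x"
  by (simp add: cubic_pair_def algebra_simps)

lemma cubic_pair_same: "cubic_pair lam i i x = 0"
  by (simp add: cubic_pair_def power2_eq_square)

lemma sum_pairs_lt: "(\<Sum>(i,j)\<in>pairs_lt d. f i j) = (\<Sum>i\<le>d. \<Sum>j\<le>d. if i < j then f i j else (0::real))"
proof -
  have "pairs_lt d = {p \<in> {..d} \<times> {..d}. fst p < snd p}"
    unfolding pairs_lt_def by auto
  then show ?thesis
    by (simp add: sum.cartesian_product sum.inter_filter case_prod_beta)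
qed

lemma bary_cubic_antisym:
  "bary_cubic d lam C x = (\<Sum>i\<le>d. \<Sum>j\<le>d. if i < j then (C i j - C j i) * cubic_pair lam i j x else 0)"
proof -
  have "bary_cubic d lam C x = (\<Sum>i\<le>d. \<Sum>j\<le>d. (if i < j then C i j * cubic_pair lam i j x else 0)
                                              + (if j < i then C i j * cubic_pair lam i j x else 0))"
    unfolding bary_cubic_def by (intro sum.cong refl) (auto simp: cubic_pair_same)
  also have "\<dots> = (\<Sum>i\<le>d. \<Sum>j\<le>d. if i < j then C i j * cubic_pair lam i j x else 0)
                + (\<Sum>i\<le>d. \<Sum>j\<le>d. if j < i then C i j * cubic_pair lam i j x else 0)"
    by (simp add: sum.distrib)
  also have "(\<Sum>i\<le>d. \<Sum>j\<le>d. if j < i then C i j * cubic_pair lam i j x else 0)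
           = (\<Sum>i\<le>d. \<Sum>j\<le>d. if i < j then C j i * cubic_pair lam j i x else 0)"
    by (rule sum.swap)
  also have "\<dots> = (\<Sum>i\<le>d. \<Sum>j\<le>d. if i < j then - (C j i * cubic_pair lam i j x) else 0)"
    by (intro sum.cong refl) (metis cubic_pair_swap mult_minus_right)
  finally show ?thesis
    by (simp add: sum.distrib[symmetric] algebra_simps if_distrib cong: if_cong)
qed

lemma cubic_span_eq: "cubic_span d lam = range (bary_cubic d lam)"
proof (intro equalityI subsetI)
  fix r assume "r \<in> cubic_span d lam"
  then obtain c where "\<And>x. r x = (\<Sum>(i,j)\<in>pairs_lt d. c i j * cubic_pair lam i j x)"
    unfolding cubic_span_def by blast
  then have "r = bary_cubic d lam (\<lambda>i j. if i < j then c i j else 0)"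
    by (auto simp: sum_pairs_lt bary_cubic_def intro!: ext sum.cong)
  then show "r \<in> range (bary_cubic d lam)" by blast
next
  fix r assume "r \<in> range (bary_cubic d lam)"
  then obtain C where "r = bary_cubic d lam C" by blast
  then show "r \<in> cubic_span d lam"
    unfolding cubic_span_def
    by (intro CollectI exI[of _ "\<lambda>i j. C i j - C j i"]) (simp add: sum_pairs_lt bary_cubic_antisym)
qed

lemma bary_quad_transpose: "bary_quad d lam (\<lambda>i j. B j i) x = bary_quad d lam B x"
  unfolding bary_quad_def by (subst sum.swap) (simp add: mult_ac)

lemma bary_poly_eq_0:
  assumes "\<And>i j. i \<le> d \<Longrightarrow> j \<le> d \<Longrightarrow> B j i = - B i j"
    and "\<And>i j. i \<le> d \<Longrightarrow> j \<le> d \<Longrightarrow> C j i = C i j"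
  shows "bary_poly d lam B C x = 0"
proof -
  have "bary_quad d lam B x = bary_quad d lam (\<lambda>i j. B j i) x"
    by (rule bary_quad_transpose[symmetric])
  also have "\<dots> = bary_quad d lam (\<lambda>i j. - B i j) x"
    unfolding bary_quad_def
  proof (intro sum.cong refl)
    fix i j assume "i \<in> {..d}" "j \<in> {..d}"
    then show "B j i * lam i x * lam j x = - B i j * lam i x * lam j x"
      using assms(1)[of i j] by simp
  qed
  finally have "bary_quad d lam B x = 0"
    by (simp add: bary_quad_def sum_negf)
  moreover have "bary_cubic d lam C x = 0"
    unfolding bary_cubic_antisym
  proof (intro sum.neutral ballI)
    fix i j assume "i \<in> {..d}" "j \<in> {..d}"
    then show "(if i < j then (C i j - C j i) * cubic_pair lam i j x else 0) = 0"
      using assms(2)[of i j] by simp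
  qed
  ultimately show ?thesis
    by (simp add: bary_poly_def)
qed

locale barycentric_coords =
  fixes d :: nat and a :: "nat \<Rightarrow> real^'n" and lam :: "nat \<Rightarrow> real^'n \<Rightarrow> real"
  assumes inj: "inj_on a {..d}"
    and affine_indep: "\<not> affine_dependent (a ` {..d})"
    and bary: "\<forall>x. (\<Sum>i\<le>d. lam i x) = 1 \<and> (\<Sum>i\<le>d. lam i x *\<^sub>R a i) = x"
begin

lemma sum_lam: "(\<Sum>i\<le>d. lam i x) = 1"
  using bary by blast

lemma sum_lam_scaleR: "(\<Sum>i\<le>d. lam i x *\<^sub>R a i) = x"
  using bary by blast

lemma bary_unique:
  assumes "(\<Sum>i\<le>d. \<mu> i) = 1" "(\<Sum>i\<le>d. \<mu> i *\<^sub>R a i) = x" "i \<le> d"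
  shows "\<mu> i = lam i x"
proof (rule ccontr)
  assume ne: "\<mu> i \<noteq> lam i x"
  define U where "U v = \<mu> (inv_into {..d} a v) - lam (inv_into {..d} a v) x" for v
  have U: "U (a j) = \<mu> j - lam j x" if "j \<le> d" for j
    using inv_into_f_f[OF inj] that by (simp add: U_def)
  have "sum U (a ` {..d}) = 0"
    using sum_lam assms(1) by (simp add: sum.reindex[OF inj] U sum_subtractf)
  moreover have "(\<Sum>v\<in>a ` {..d}. U v *\<^sub>R v) = 0"
    using sum_lam_scaleR assms(2) by (simp add: sum.reindex[OF inj] U scaleR_diff_left sum_subtractf)
  moreover have "\<exists>v\<in>a ` {..d}. U v \<noteq> 0"
    using ne assms(3) U by force
  ultimately have "affine_dependent (a ` {..d})"
    unfolding affine_dependent_explicit by blast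
  with affine_indep show False ..
qed

lemma lam_vertex: "i \<le> d \<Longrightarrow> k \<le> d \<Longrightarrow> lam i (a k) = (if i = k then 1 else 0)"
  by (rule bary_unique[symmetric]) (simp_all add: if_distrib[of "\<lambda>c. c *\<^sub>R _"] cong: if_cong)

lemma lam_add: "i \<le> d \<Longrightarrow> lam i (x + y) = lam i x + lam i y - lam i 0"
  by (rule bary_unique[symmetric])
     (simp_all add: sum.distrib sum_subtractf scaleR_diff_left scaleR_add_left sum_lam sum_lam_scaleR)

lemma lam_scaleR: "i \<le> d \<Longrightarrow> lam i (c *\<^sub>R x) = c * lam i x + (1 - c) * lam i 0"
  by (rule bary_unique[symmetric])
     (simp_all add: sum.distrib scaleR_add_left sum_lam sum_lam_scaleR
        flip: sum_distrib_left scaleR_scaleR scaleR_sum_right)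

definition lam_lin :: "nat \<Rightarrow> real^'n \<Rightarrow> real"
  where "lam_lin i v = lam i v - lam i 0"

lemma linear_lam_lin: "i \<le> d \<Longrightarrow> linear (lam_lin i)"
  by (rule linearI) (simp_all add: lam_lin_def lam_add lam_scaleR algebra_simps)

lemma lam_has_derivative: "i \<le> d \<Longrightarrow> (lam i has_derivative lam_lin i) (at x)"
proof -
  assume "i \<le> d"
  then have "((\<lambda>v. lam_lin i v + lam i 0) has_derivative lam_lin i) (at x)"
    by (intro has_derivative_add_const linear_imp_has_derivative linear_lam_lin)
  then show ?thesis by (simp add: lam_lin_def)
qed

lemma lam_lin_edge: "i \<le> d \<Longrightarrow> k \<le> d \<Longrightarrow> l \<le> d \<Longrightarrow>
   lam_lin i (a l - a k) = (if i = l then 1 else 0) - (if i = k then 1 else 0)"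
  using lam_add[of i "a l - a k" "a k"] lam_vertex by (simp add: lam_lin_def)

lemma lam_affine_coords: "i \<le> d \<Longrightarrow> lam i x = lam i 0 + (\<Sum>k\<in>UNIV. lam_lin i (axis k 1) * x$k)"
proof -
  assume "i \<le> d"
  have "lam_lin i x = lam_lin i (\<Sum>k\<in>UNIV. x$k *\<^sub>R axis k 1)"
    using basis_expansion[of x] by (simp add: scalar_mult_eq_scaleR)
  also have "\<dots> = (\<Sum>k\<in>UNIV. x$k * lam_lin i (axis k 1))"
    using linear_lam_lin[OF \<open>i \<le> d\<close>] by (simp add: linear_sum linear_scale)
  finally show ?thesis by (simp add: lam_lin_def mult.commute)
qed

lemma coord_bary: "x$k = (\<Sum>i\<le>d. lam i x * a i $ k)"
  using arg_cong[OF sum_lam_scaleR, of "\<lambda>y. y $ k"] by simp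

lemma linear_form_bary: "(\<Sum>k\<in>UNIV. b k * x$k) = (\<Sum>i\<le>d. (\<Sum>k\<in>UNIV. b k * a i $ k) * lam i x)"
  by (subst coord_bary) (simp add: sum_distrib_left sum_distrib_right sum.swap[of _ UNIV] ac_simps)

lemma bilinear_form_bary:
  "(\<Sum>k\<in>UNIV. \<Sum>m\<in>UNIV. A k m * x$k * y$m)
   = (\<Sum>i\<le>d. \<Sum>j\<le>d. (\<Sum>k\<in>UNIV. \<Sum>m\<in>UNIV. A k m * a i $ k * a j $ m) * lam i x * lam j y)"
proof -
  have "(\<Sum>k\<in>UNIV. \<Sum>m\<in>UNIV. A k m * x$k * y$m) = (\<Sum>k\<in>UNIV. x$k * (\<Sum>m\<in>UNIV. A k m * y$m))"
    by (simp add: sum_distrib_left mult_ac)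
  also have "\<dots> = (\<Sum>k\<in>UNIV. x$k * (\<Sum>j\<le>d. (\<Sum>m\<in>UNIV. A k m * a j $ m) * lam j y))"
    by (simp only: linear_form_bary[of _ y])
  also have "\<dots> = (\<Sum>j\<le>d. (\<Sum>k\<in>UNIV. (\<Sum>m\<in>UNIV. A k m * a j $ m) * x$k) * lam j y)"
    by (simp only: sum_distrib_left sum_distrib_right, subst sum.swap, simp add: mult_ac)
  also have "\<dots> = (\<Sum>j\<le>d. (\<Sum>i\<le>d. (\<Sum>k\<in>UNIV. (\<Sum>m\<in>UNIV. A k m * a j $ m) * a i $ k) * lam i x) * lam j y)"
    by (simp only: linear_form_bary[of _ x])
  also have "\<dots> = (\<Sum>i\<le>d. \<Sum>j\<le>d. (\<Sum>k\<in>UNIV. \<Sum>m\<in>UNIV. A k m * a i $ k * a j $ m) * lam i x * lam j y)"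
    by (simp only: sum_distrib_left sum_distrib_right, subst sum.swap, simp add: mult_ac)
  finally show ?thesis .
qed

lemma P2_imp_bary_quad:
  assumes "q \<in> P2"
  shows "\<exists>B. q = bary_quad d lam B"
proof -
  obtain c b A where
    q: "\<And>x. q x = c + (\<Sum>k\<in>UNIV. b k * x$k) + (\<Sum>k\<in>UNIV. \<Sum>m\<in>UNIV. A k m * x$k * x$m)"
    using assms unfolding P2_def by blast
  \<comment> \<open>\<open>q x = \<beta> x x\<close> for \<open>\<beta> y z = c + b \<bullet> y + y\<^sup>T A z\<close>, and \<open>B i j = \<beta> (a i) (a j)\<close>\<close>
  define B where
    "B i j = c + (\<Sum>k\<in>UNIV. b k * a i $ k) + (\<Sum>k\<in>UNIV. \<Sum>m\<in>UNIV. A k m * a i $ k * a j $ m)" for i j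
  have "q x = bary_quad d lam B x" for x
  proof -
    have row: "(\<Sum>i\<le>d. \<Sum>j\<le>d. f i * lam i x * lam j x) = (\<Sum>i\<le>d. f i * lam i x)" for f
      by (simp add: sum_lam flip: sum_distrib_left)
    have "bary_quad d lam B x = (\<Sum>i\<le>d. c * lam i x) + (\<Sum>i\<le>d. (\<Sum>k\<in>UNIV. b k * a i $ k) * lam i x)
        + (\<Sum>i\<le>d. \<Sum>j\<le>d. (\<Sum>k\<in>UNIV. \<Sum>m\<in>UNIV. A k m * a i $ k * a j $ m) * lam i x * lam j x)"
      unfolding bary_quad_def B_def by (simp add: distrib_right sum.distrib row)
    then show ?thesis
      by (simp add: q sum_lam linear_form_bary[of b x] bilinear_form_bary[of A x x] flip: sum_distrib_left)
  qed
  then show ?thesis by blast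
qed

lemma bary_quad_in_P2: "bary_quad d lam B \<in> P2"
proof -
  have "(\<lambda>x. lam i x * lam j x) \<in> P2" if "i \<le> d" "j \<le> d" for i j
    by (rule P2_mult_affine; rule lam_affine_coords; fact)
  then have "(\<lambda>x. \<Sum>i\<le>d. \<Sum>j\<le>d. B i j * (lam i x * lam j x)) \<in> P2"
    by (auto intro!: P2_sum P2_cmult)
  then show ?thesis
    unfolding bary_quad_def[abs_def] by (simp add: mult.assoc)
qed

lemma Zspace_eq: "Zspace d lam = {bary_poly d lam B C | B C. True}"
proof (intro equalityI subsetI)
  fix p assume "p \<in> Zspace d lam"
  then obtain q r where "q \<in> P2" "r \<in> cubic_span d lam" and p: "\<And>x. p x = q x + r x"
    unfolding Zspace_def by blast
  then obtain B C where "q = bary_quad d lam B" "r = bary_cubic d lam C"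
    using P2_imp_bary_quad cubic_span_eq by blast
  then have "p = bary_poly d lam B C"
    using p by (auto simp: bary_poly_def)
  then show "p \<in> {bary_poly d lam B C | B C. True}" by blast
next
  fix p assume "p \<in> {bary_poly d lam B C | B C. True}"
  then obtain B C where "p = bary_poly d lam B C" by blast
  then show "p \<in> Zspace d lam"
    unfolding Zspace_def bary_poly_def cubic_span_eq using bary_quad_in_P2 by blast
qed

lemma cubic_pair_vertex: "i \<le> d \<Longrightarrow> j \<le> d \<Longrightarrow> k \<le> d \<Longrightarrow> cubic_pair lam i j (a k) = 0"
  by (simp add: cubic_pair_def lam_vertex)

lemma bary_poly_vertex: "k \<le> d \<Longrightarrow> bary_poly d lam B C (a k) = B k k"
  by (simp add: bary_poly_def bary_quad_def bary_cubic_def cubic_pair_vertex lam_vertex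
      if_distrib[of "(*) _"] cong: if_cong)

lemma cubic_pair_has_derivative:
  assumes "i \<le> d" "j \<le> d"
  shows "(cubic_pair lam i j has_derivative (\<lambda>v. 2 * lam i x * lam_lin i v * lam j x + (lam i x)\<^sup>2 * lam_lin j v
           - lam_lin i v * (lam j x)\<^sup>2 - 2 * lam i x * lam j x * lam_lin j v)) (at x)"
  unfolding cubic_pair_def[abs_def]
  by (rule derivative_eq_intros lam_has_derivative assms refl | simp add: algebra_simps power2_eq_square)+

lemma bary_poly_has_derivative:
  "(bary_poly d lam B C has_derivative (\<lambda>v.
      (\<Sum>i\<le>d. \<Sum>j\<le>d. B i j * (lam_lin i v * lam j x + lam i x * lam_lin j v))
    + (\<Sum>i\<le>d. \<Sum>j\<le>d. C i j * (2 * lam i x * lam_lin i v * lam j x + (lam i x)\<^sup>2 * lam_lin j v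
           - lam_lin i v * (lam j x)\<^sup>2 - 2 * lam i x * lam j x * lam_lin j v)))) (at x)"
  unfolding bary_poly_def[abs_def] bary_quad_def bary_cubic_def
  by (rule derivative_eq_intros lam_has_derivative cubic_pair_has_derivative refl | simp add: algebra_simps)+

lemma dirderiv_bary_poly_edge:
  assumes "k \<le> d" "l \<le> d" "k \<noteq> l"
  shows "dirderiv (bary_poly d lam B C) (a k) (a l - a k) = B k l + B l k - 2 * B k k + C k l - C l k"
  unfolding dirderiv_def frechet_derivative_at[OF bary_poly_has_derivative, symmetric]
  using assms
  by (simp add: lam_vertex lam_lin_edge if_distrib[of "(*) _"] if_distrib[of "\<lambda>x. x * _"] algebra_simps
      power2_eq_square sum.distrib sum_subtractf if_distrib[of uminus] cong: if_cong)

definition has_dofs :: "(real^'n \<Rightarrow> real) \<Rightarrow> (nat \<Rightarrow> real) \<Rightarrow> (nat \<Rightarrow> nat \<Rightarrow> real) \<Rightarrow> bool"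
  where "has_dofs p f g \<longleftrightarrow> (\<forall>i\<le>d. p (a i) = f i)
                            \<and> (\<forall>i\<le>d. \<forall>j\<le>d. j \<noteq> i \<longrightarrow> dirderiv p (a i) (a j - a i) = g i j)"

lemma has_dofs_bary_poly:
  "has_dofs (bary_poly d lam B C) (\<lambda>k. B k k) (\<lambda>k l. B k l + B l k - 2 * B k k + C k l - C l k)"
  unfolding has_dofs_def by (simp add: bary_poly_vertex dirderiv_bary_poly_edge)

lemma has_dofs_zero: "has_dofs (\<lambda>x. 0) (\<lambda>k. 0) (\<lambda>k l. 0)"
  unfolding has_dofs_def dirderiv_def
  using frechet_derivative_at[OF has_derivative_const[of "0::real"]] by simp

lemma Zspace_unisolvent:
  assumes "p \<in> Zspace d lam" "q \<in> Zspace d lam" "has_dofs p f g" "has_dofs q f g"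
  shows "p = q"
proof -
  obtain B C B' C' where p: "p = bary_poly d lam B C" and q: "q = bary_poly d lam B' C'"
    using assms(1,2) unfolding Zspace_eq by blast
  have val: "B k k = B' k k" if "k \<le> d" for k
  proof -
    have "p (a k) = f k" "q (a k) = f k"
      using assms(3,4) that unfolding has_dofs_def by auto
    then show ?thesis
      using bary_poly_vertex[OF that] unfolding p q by simp
  qed
  have edge: "B k l + B l k - 2 * B k k + C k l - C l k = B' k l + B' l k - 2 * B' k k + C' k l - C' l k"
    if "k \<le> d" "l \<le> d" "k \<noteq> l" for k l
  proof -
    have "dirderiv p (a k) (a l - a k) = g k l" "dirderiv q (a k) (a l - a k) = g k l"
      using assms(3,4) that unfolding has_dofs_def by auto
    then show ?thesis
      using dirderiv_bary_poly_edge[OF that] unfolding p q by simp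
  qed
  define E where "E i j = B i j - B' i j" for i j
  define F where "F i j = C i j - C' i j" for i j
  have "bary_poly d lam E F x = 0" for x
  proof (rule bary_poly_eq_0)
    fix i j assume "i \<le> d" "j \<le> d"
    then show "E j i = - E i j" "F j i = F i j"
      using edge[of i j] edge[of j i] val[of i] val[of j] unfolding E_def F_def
      by (cases "i = j"; simp)+
  qed
  then show "p = q"
    unfolding p q E_def F_def bary_poly_diff by auto
qed

lemma Zspace_interpolant_exists: "\<exists>p\<in>Zspace d lam. has_dofs p f g"
proof -
  define B where "B k l = (if k = l then f k else (f k + f l) / 2 + (g k l + g l k) / 4)" for k l
  define C where "C k l = (f k - f l) / 2 + (g k l - g l k) / 4" for k l
  have "has_dofs (bary_poly d lam B C) f g"
    using has_dofs_bary_poly[of B C] unfolding has_dofs_def by (simp add: B_def C_def field_simps)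
  then show ?thesis
    unfolding Zspace_eq by blast
qed

lemma cubic_span_inter_P2:
  assumes "r \<in> cubic_span d lam" "r \<in> P2"
  shows "r = (\<lambda>x. 0)"
proof -
  obtain C where rC: "r = bary_poly d lam (\<lambda>_ _. 0) C"
    using assms(1) unfolding cubic_span_eq by (metis bary_poly_zero_quad rangeE)
  obtain B where rB: "r = bary_poly d lam B (\<lambda>_ _. 0)"
    using P2_imp_bary_quad[OF assms(2)] by (metis bary_poly_zero_cubic)
  have diag: "B k k = 0" if "k \<le> d" for k
    using bary_poly_vertex[OF that, of B "\<lambda>_ _. 0"] bary_poly_vertex[OF that, of "\<lambda>_ _. 0" C]
    unfolding rB[symmetric] rC[symmetric] by simp
  \<comment> \<open>The edge derivatives of \<open>r\<close> are symmetric by its quadratic representation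
      and antisymmetric by its cubic one.\<close>
  define D where "D k l = dirderiv r (a k) (a l - a k)" for k l
  have "D k l = 0" if "k \<le> d" "l \<le> d" "k \<noteq> l" for k l
  proof -
    have "D k l = D l k"
      using dirderiv_bary_poly_edge[of k l B "\<lambda>_ _. 0"] dirderiv_bary_poly_edge[of l k B "\<lambda>_ _. 0"] that diag
      unfolding D_def rB by simp
    moreover have "D k l = - D l k"
      using dirderiv_bary_poly_edge[of k l "\<lambda>_ _. 0" C] dirderiv_bary_poly_edge[of l k "\<lambda>_ _. 0" C] that
      unfolding D_def rC by simp
    ultimately show ?thesis by simp
  qed
  then have dofs: "has_dofs r (\<lambda>k. 0) (\<lambda>k l. 0)"
    using has_dofs_bary_poly unfolding has_dofs_def D_def rC by simp
  have "(\<lambda>x. 0) = bary_poly d lam (\<lambda>_ _. 0) (\<lambda>_ _. 0)"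
    by (simp add: bary_poly_def bary_quad_def bary_cubic_def fun_eq_iff)
  then have "r \<in> Zspace d lam" "(\<lambda>x. 0) \<in> Zspace d lam"
    unfolding Zspace_eq rC by blast+
  then show ?thesis
    using dofs has_dofs_zero Zspace_unisolvent by blast
qed

lemma nodal_vertex_basis:
  assumes "i \<le> d"
  defines "\<phi> \<equiv> \<lambda>x. lam i x + (\<Sum>j\<in>{..d} - {i}. cubic_pair lam i j x)"
  shows "\<phi> \<in> Zspace d lam \<and> has_dofs \<phi> (\<lambda>k. if i = k then 1 else 0) (\<lambda>k l. 0)"
proof -
  define B where "B k l = (if k = i then 1 else 0 :: real)" for k l :: nat
  have "bary_quad d lam B x = (\<Sum>k\<le>d. if k = i then lam i x * (\<Sum>j\<le>d. lam j x) else 0)" for x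
    unfolding bary_quad_def B_def by (intro sum.cong refl) (simp add: sum_distrib_left)
  moreover have "bary_cubic d lam B x = (\<Sum>k\<le>d. if k = i then (\<Sum>j\<le>d. cubic_pair lam i j x) else 0)" for x
    unfolding bary_cubic_def B_def by (intro sum.cong refl) simp
  moreover have "(\<Sum>j\<le>d. cubic_pair lam i j x) = (\<Sum>j\<in>{..d} - {i}. cubic_pair lam i j x)" for x
    using assms(1) by (simp add: sum.remove[of "{..d}" i] cubic_pair_same)
  ultimately have "\<phi> = bary_poly d lam B B"
    using assms(1) by (simp add: \<phi>_def bary_poly_def sum_lam fun_eq_iff)
  then show ?thesis
    using has_dofs_bary_poly[of B B] unfolding Zspace_eq has_dofs_def by (auto simp: B_def)
qed

lemma nodal_edge_basis:
  assumes "i \<le> d" "j \<le> d" "i \<noteq> j"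
  defines "\<phi> \<equiv> \<lambda>x. (1/2) * (lam i x * lam j x + cubic_pair lam i j x)"
  shows "\<phi> \<in> Zspace d lam \<and> has_dofs \<phi> (\<lambda>k. 0) (\<lambda>k l. if i = k \<and> j = l then 1 else 0)"
proof -
  define B where "B k l = (if l = j then if k = i then 1/2 else 0 else 0 :: real)" for k l
  have "\<phi> = bary_poly d lam B B"
    using assms(1,2) by (simp add: \<phi>_def bary_poly_def bary_quad_def bary_cubic_def B_def fun_eq_iff
        if_distrib[of "\<lambda>x. x * _"] if_distrib[of "(*) _"] cong: if_cong)
  then show ?thesis
    using has_dofs_bary_poly[of B B] assms(3) unfolding Zspace_eq has_dofs_def by (auto simp: B_def)
qed

end

theorem mainTheorem1:
  fixes a :: "nat \<Rightarrow> real^'n"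
    and lam :: "nat \<Rightarrow> real^'n \<Rightarrow> real"
  assumes dim: "CARD('n) \<ge> 2"
    and inj: "inj_on a {..CARD('n)}"
    and nondeg: "\<not> affine_dependent (a ` {..CARD('n)})"
    and bary: "\<forall>x. (\<Sum>i\<le>CARD('n). lam i x) = 1 \<and> (\<Sum>i\<le>CARD('n). lam i x *\<^sub>R a i) = x"
  shows
    "(\<forall>r\<in>cubic_span CARD('n) lam. r \<in> P2 \<longrightarrow> (\<forall>x. r x = 0))
     \<and> (\<forall>(f::nat \<Rightarrow> real) (g::nat \<Rightarrow> nat \<Rightarrow> real). \<exists>!p. p \<in> Zspace CARD('n) lam
          \<and> (\<forall>i\<le>CARD('n). p (a i) = f i)
          \<and> (\<forall>i\<le>CARD('n). \<forall>j\<le>CARD('n). j \<noteq> i \<longrightarrow> dirderiv p (a i) (a j - a i) = g i j))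
     \<and> (\<forall>i\<le>CARD('n).
          let phi = (\<lambda>x. lam i x + (\<Sum>j\<in>{..CARD('n)} - {i}. cubic_pair lam i j x)) in
          phi \<in> Zspace CARD('n) lam
          \<and> (\<forall>k\<le>CARD('n). phi (a k) = (if i = k then 1 else 0))
          \<and> (\<forall>k\<le>CARD('n). \<forall>l\<le>CARD('n). k \<noteq> l \<longrightarrow> dirderiv phi (a k) (a l - a k) = 0))
     \<and> (\<forall>i\<le>CARD('n). \<forall>j\<le>CARD('n). i \<noteq> j \<longrightarrow>
          (let phi = (\<lambda>x. (1/2) * (lam i x * lam j x + cubic_pair lam i j x)) in
          phi \<in> Zspace CARD('n) lam
          \<and> (\<forall>k\<le>CARD('n). phi (a k) = 0)
          \<and> (\<forall>k\<le>CARD('n). \<forall>l\<le>CARD('n). k \<noteq> l \<longrightarrow>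
               dirderiv phi (a k) (a l - a k) = (if i = k \<and> j = l then 1 else 0))))"
proof -
  interpret barycentric_coords "CARD('n)" a lam
    using inj nondeg bary by unfold_locales
  have "\<exists>!p. p \<in> Zspace CARD('n) lam \<and> has_dofs p f g" for f g
    using Zspace_interpolant_exists Zspace_unisolvent by blast
  then show ?thesis
    using cubic_span_inter_P2 nodal_vertex_basis nodal_edge_basis
    unfolding has_dofs_def Let_def by (auto simp: fun_eq_iff)
qed

end
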